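(* Let $M=(Q,\underline q,\Sigma_I,\Sigma_O,h)$ be a deterministic, completely specified prime FSM, $R=R(q_1,x_1,Z_1)\wedge\dots\wedge R(q_k,x_k,Z_k)$ a composite requirement on $M$ (pairs $(q_i,x_i)$ pairwise distinct, $\omega_M(q_i,x_i)\in Z_i\subsetneq\Sigma_O$), and $M_1'$ the nondeterministic requirement abstraction. Let $\mathcal D$ be a set of completely specified DFSMs over $\Sigma_I,\Sigma_O$, and let $TS\subseteq\Sigma_I^*$ be a complete reduction test suite, i.e. for all $S\in\mathcal D$: $L(S)\subseteq L(M_1')$ iff $S\ \mathrm{pass}_\Leftrightarrow\ TS$. Define $\overline\Pi=\bigcup_{i=1}^k\Pi(q_i).\{x_i\}$. Then every test suite $TS_\Leftrightarrow\subseteq\Sigma_I^*$ with $\mathrm{pref}(TS)\cap\overline\Pi\subseteq TS_\Leftrightarrow$ satisfies, for all $S\in\mathcal D$, $$S\ \mathrm{pass}_\Leftrightarrow\ TS_\Leftrightarrow \iff S\models R.$$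
   Context: FSM $(Q,\underline q,\Sigma_I,\Sigma_O,h)$ with $h\subseteq Q\times\Sigma_I\times\Sigma_O\times Q$; the language $L(q)$ of a state is the set of I/O-traces $(x_1,y_1)\dots(x_k,y_k)$ (including the empty trace) realisable by a transition path from $q$; $L(M)=L(\underline q)$. A completely specified DFSM has transition function $\delta$ and output function $\omega$, extended to input sequences in the usual way; $q\text{-after-}\bar x=\delta(q,\bar x)$. Prime machine: DFSM with minimal number of states among language-equivalent DFSMs. $\mathrm{pref}(X)$ denotes the set of all prefixes of traces in $X$; $X.Y=\{x.y\mid x\in X,y\in Y\}$. $\Pi(q)=\{\bar x\in\Sigma_I^*\mid\underline q\text{-after-}\bar x=q\}$ (in $M$). $S\models R(q,x,Z)$ iff $\omega_S(\underline s\text{-after-}\pi,x)\in Z$ for all $\pi\in\Pi(q)$, where $\underline s$ is the initial state of $S$; $S\models R$ iff each conjunct holds. Requirement abstraction $M_1$: same states, initial state and transition function $\delta_M$ as $M$, output $\omega_{M_1}(q_i,x_i)=Z_i$ and $\omega_{M_1}(q,x)=\Sigma_O$ otherwise. Nondeterministic abstraction $M_1'=(Q,\underline q,\Sigma_I,\Sigma_O,h_1')$ with $(q,x,y,q')\in h_1'$ iff $q'=\delta_M(q,x)$ and $y\in\omega_{M_1}(q,x)$; its set-valued output function $\omega_{M_1'}(q,\bar x)$ is the set of output traces $\bar y$ with $\bar x/\bar y\in L(q)$ in $M_1'$. Pass criterion: for a DFSM $S$ and $\bar x\in\Sigma_I^*$, $S\ \mathrm{pass}_\Leftrightarrow\ \bar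 x$ iff $\omega_S(\underline s,\bar x)\in\omega_{M_1'}(\underline q,\bar x)$; for a set $T$, $S\ \mathrm{pass}_\Leftrightarrow\ T$ iff $S\ \mathrm{pass}_\Leftrightarrow\ \bar x$ for all $\bar x\in T$. *)

theory Defs
  imports Main
begin

record ('q, 'x, 'y) fsm =
  states  :: "'q set"
  initial :: "'q"
  inputs  :: "'x set"
  outputs :: "'y set"
  trans   :: "('q \<times> 'x \<times> 'y \<times> 'q) set"

definition well_formed :: "('q, 'x, 'y) fsm \<Rightarrow> bool" where
  "well_formed M \<longleftrightarrow> finite (states M) \<and> finite (inputs M) \<and> finite (outputs M)
     \<and> initial M \<in> states M
     \<and> trans M \<subseteq> states M \<times> inputs M \<times> outputs M \<times> states M"

definition deterministic :: "('q, 'x, 'y) fsm \<Rightarrow> bool" where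
  "deterministic M \<longleftrightarrow> (\<forall>q x y q' y' q''. (q, x, y, q') \<in> trans M \<longrightarrow> (q, x, y', q'') \<in> trans M
       \<longrightarrow> y = y' \<and> q' = q'')"

definition completely_specified :: "('q, 'x, 'y) fsm \<Rightarrow> bool" where
  "completely_specified M \<longleftrightarrow> (\<forall>q \<in> states M. \<forall>x \<in> inputs M. \<exists>y q'. (q, x, y, q') \<in> trans M)"

definition cs_dfsm :: "('q, 'x, 'y) fsm \<Rightarrow> bool" where
  "cs_dfsm M \<longleftrightarrow> well_formed M \<and> deterministic M \<and> completely_specified M"

inductive lang_rel :: "('q, 'x, 'y) fsm \<Rightarrow> 'q \<Rightarrow> ('x \<times> 'y) list \<Rightarrow> bool"
  for M :: "('q, 'x, 'y) fsm" where
  lang_nil: "lang_rel M q []"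
| lang_cons: "(q, x, y, q') \<in> trans M \<Longrightarrow> lang_rel M q' tr \<Longrightarrow> lang_rel M q ((x, y) # tr)"

definition lang :: "('q, 'x, 'y) fsm \<Rightarrow> 'q \<Rightarrow> ('x \<times> 'y) list set" where
  "lang M q = {tr. lang_rel M q tr}"

definition L :: "('q, 'x, 'y) fsm \<Rightarrow> ('x \<times> 'y) list set" where
  "L M = lang M (initial M)"

definition delta :: "('q, 'x, 'y) fsm \<Rightarrow> 'q \<Rightarrow> 'x \<Rightarrow> 'q" where
  "delta M q x = (THE q'. \<exists>y. (q, x, y, q') \<in> trans M)"

definition omega :: "('q, 'x, 'y) fsm \<Rightarrow> 'q \<Rightarrow> 'x \<Rightarrow> 'y" where
  "omega M q x = (THE y. \<exists>q'. (q, x, y, q') \<in> trans M)"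

fun after :: "('q, 'x, 'y) fsm \<Rightarrow> 'q \<Rightarrow> 'x list \<Rightarrow> 'q" where
  "after M q [] = q"
| "after M q (x # xs) = after M (delta M q x) xs"

fun omega_seq :: "('q, 'x, 'y) fsm \<Rightarrow> 'q \<Rightarrow> 'x list \<Rightarrow> 'y list" where
  "omega_seq M q [] = []"
| "omega_seq M q (x # xs) = omega M q x # omega_seq M (delta M q x) xs"

text \<open>Prime machine: minimal number of states among language-equivalent DFSMs
  (any DFSM with at most card (states M) states can be renamed into the state type of M,
   so quantifying over machines of the same state type is no restriction).\<close>
definition prime_fsm :: "('q, 'x, 'y) fsm \<Rightarrow> bool" where
  "prime_fsm M \<longleftrightarrow> cs_dfsm M \<and>
     (\<forall>M' :: ('q, 'x, 'y) fsm. cs_dfsm M' \<and> inputs M' = inputs M \<and> outputs M' = outputs M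
        \<and> L M' = L M \<longrightarrow> card (states M) \<le> card (states M'))"

definition Pi_set :: "('q, 'x, 'y) fsm \<Rightarrow> 'q \<Rightarrow> 'x list set" where
  "Pi_set M q = {xs \<in> lists (inputs M). after M (initial M) xs = q}"

type_synonym ('q, 'x, 'y) requirement = "('q \<times> 'x \<times> 'y set) list"

definition valid_requirement :: "('q, 'x, 'y) fsm \<Rightarrow> ('q, 'x, 'y) requirement \<Rightarrow> bool" where
  "valid_requirement M R \<longleftrightarrow>
     distinct (map (\<lambda>(q, x, Z). (q, x)) R) \<and>
     (\<forall>(q, x, Z) \<in> set R. q \<in> states M \<and> x \<in> inputs M \<and> omega M q x \<in> Z \<and> Z \<subset> outputs M)"

definition satisfies :: "('s, 'x, 'y) fsm \<Rightarrow> ('q, 'x, 'y) fsm \<Rightarrow> ('q, 'x, 'y) requirement \<Rightarrow> bool" where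
  "satisfies S M R \<longleftrightarrow>
     (\<forall>(q, x, Z) \<in> set R. \<forall>\<pi> \<in> Pi_set M q. omega S (after S (initial S) \<pi>) x \<in> Z)"

definition omega_M1 :: "('q, 'x, 'y) fsm \<Rightarrow> ('q, 'x, 'y) requirement \<Rightarrow> 'q \<Rightarrow> 'x \<Rightarrow> 'y set" where
  "omega_M1 M R q x = (if \<exists>Z. (q, x, Z) \<in> set R then (THE Z. (q, x, Z) \<in> set R) else outputs M)"

definition abstraction :: "('q, 'x, 'y) fsm \<Rightarrow> ('q, 'x, 'y) requirement \<Rightarrow> ('q, 'x, 'y) fsm" where
  "abstraction M R = \<lparr> states = states M, initial = initial M, inputs = inputs M, outputs = outputs M,
     trans = {(q, x, y, q'). q \<in> states M \<and> x \<in> inputs M \<and> q' = delta M q x \<and> y \<in> omega_M1 M R q x} \<rparr>"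

definition omega_set :: "('q, 'x, 'y) fsm \<Rightarrow> 'q \<Rightarrow> 'x list \<Rightarrow> 'y list set" where
  "omega_set M q xs = {ys. length ys = length xs \<and> zip xs ys \<in> lang M q}"

definition pass :: "('s, 'x, 'y) fsm \<Rightarrow> ('q, 'x, 'y) fsm \<Rightarrow> 'x list \<Rightarrow> bool" where
  "pass S M1' xs \<longleftrightarrow> omega_seq S (initial S) xs \<in> omega_set M1' (initial M1') xs"

definition pass_set :: "('s, 'x, 'y) fsm \<Rightarrow> ('q, 'x, 'y) fsm \<Rightarrow> 'x list set \<Rightarrow> bool" where
  "pass_set S M1' T \<longleftrightarrow> (\<forall>xs \<in> T. pass S M1' xs)"

definition pref :: "'a list set \<Rightarrow> 'a list set" where
  "pref X = {p. \<exists>t \<in> X. \<exists>s. t = p @ s}"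

definition Pi_bar :: "('q, 'x, 'y) fsm \<Rightarrow> ('q, 'x, 'y) requirement \<Rightarrow> 'x list set" where
  "Pi_bar M R = (\<Union>(q, x, Z) \<in> set R. (\<lambda>\<pi>. \<pi> @ [x]) ` Pi_set M q)"

end

theory Submission
  imports Defs
begin

text \<open>Call a word \<open>p @ [x]\<close> a violation of \<open>S\<close> if the output of \<open>S\<close> on \<open>x\<close> after \<open>p\<close> lies outside
  the output set that the requirement abstraction allows there. Running an input sequence passes
  exactly when none of its prefixes is a violation, and \<open>S \<Turnstile> R\<close> holds exactly when there is no
  violation at all. Every violation lies in \<open>\<Pi>\<close>-bar, because outside the requirement the abstraction
  allows every output. So if \<open>S\<close> violates \<open>R\<close>, it is not a reduction of \<open>M\<^sub>1'\<close>; by completeness it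
  fails some test of \<open>TS\<close>, and the shortest failing prefix of that test is a violation in
  \<open>pref TS \<inter> \<Pi>\<close>-bar, hence a test of \<open>TS\<^sub>\<Leftrightarrow>\<close> that fails as well.\<close>

lemma cs_dfsm_trans:
  assumes "cs_dfsm S" "s \<in> states S" "x \<in> inputs S"
  shows "(s, x, omega S s x, delta S s x) \<in> trans S"
proof -
  obtain y s' where t: "(s, x, y, s') \<in> trans S"
    using assms unfolding cs_dfsm_def completely_specified_def by blast
  have det: "deterministic S" using assms(1) unfolding cs_dfsm_def by simp
  have "omega S s x = y" unfolding omega_def
    by (rule the_equality) (use t det in \<open>auto simp: deterministic_def\<close>)
  moreover have "delta S s x = s'" unfolding delta_def
    by (rule the_equality) (use t det in \<open>auto simp: deterministic_def\<close>)
  ultimately show ?thesis using t by simp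
qed

lemma cs_dfsm_delta_omega_closed:
  assumes "cs_dfsm S" "s \<in> states S" "x \<in> inputs S"
  shows "delta S s x \<in> states S" "omega S s x \<in> outputs S"
  using cs_dfsm_trans[OF assms] assms(1) unfolding cs_dfsm_def well_formed_def by auto

lemma cs_dfsm_initial: "cs_dfsm S \<Longrightarrow> initial S \<in> states S"
  by (simp add: cs_dfsm_def well_formed_def)

lemma after_in_states:
  assumes "cs_dfsm S" "s \<in> states S" "xs \<in> lists (inputs S)"
  shows "after S s xs \<in> states S"
  using assms(2,3)
  by (induction xs arbitrary: s) (auto simp: cs_dfsm_delta_omega_closed[OF assms(1)])

lemma length_omega_seq [simp]: "length (omega_seq S s xs) = length xs"
  by (induction xs arbitrary: s) auto

lemma lang_rel_zip_omega_seq: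
  assumes "cs_dfsm S" "s \<in> states S" "xs \<in> lists (inputs S)"
  shows "lang_rel S s (zip xs (omega_seq S s xs))"
  using assms(2,3)
  by (induction xs arbitrary: s)
     (auto intro!: lang_rel.intros cs_dfsm_trans[OF assms(1)]
           simp: cs_dfsm_delta_omega_closed[OF assms(1)])

lemma lang_rel_Cons_iff:
  "lang_rel A q ((x, y) # tr) \<longleftrightarrow> (\<exists>q'. (q, x, y, q') \<in> trans A \<and> lang_rel A q' tr)"
  by (auto intro: lang_rel.intros elim: lang_rel.cases)

lemma omega_seq_in_omega_set_abstraction_iff:
  assumes "cs_dfsm M" "cs_dfsm S" "inputs S = inputs M"
    and "q \<in> states M" "s \<in> states S" "xs \<in> lists (inputs M)"
  shows "omega_seq S s xs \<in> omega_set (abstraction M R) q xs \<longleftrightarrow>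
    (\<forall>i<length xs. omega S (after S s (take i xs)) (xs ! i)
                     \<in> omega_M1 M R (after M q (take i xs)) (xs ! i))"
  using assms(4-6)
proof (induction xs arbitrary: q s)
  case Nil
  then show ?case by (simp add: omega_set_def lang_def lang_nil)
next
  case (Cons x xs)
  then have x: "x \<in> inputs M" "xs \<in> lists (inputs M)" by auto
  have q': "delta M q x \<in> states M"
    using cs_dfsm_delta_omega_closed[OF assms(1) Cons.prems(1) x(1)] by simp
  have s': "delta S s x \<in> states S"
    using cs_dfsm_delta_omega_closed[OF assms(2) Cons.prems(2)] x(1) assms(3) by simp
  have "omega_seq S s (x # xs) \<in> omega_set (abstraction M R) q (x # xs) \<longleftrightarrow>
      omega S s x \<in> omega_M1 M R q x \<and>
      omega_seq S (delta S s x) xs \<in> omega_set (abstraction M R) (delta M q x) xs"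
    using Cons.prems x by (auto simp: omega_set_def lang_def lang_rel_Cons_iff abstraction_def)
  also have "\<dots> \<longleftrightarrow> (\<forall>i<length (x # xs). omega S (after S s (take i (x # xs))) ((x # xs) ! i)
                     \<in> omega_M1 M R (after M q (take i (x # xs))) ((x # xs) ! i))"
    using Cons.IH[OF q' s' x(2)] by (simp add: All_less_Suc2)
  finally show ?case .

qed

lemma omega_M1_requirement:
  assumes "valid_requirement M R" "(q, x, Z) \<in> set R"
  shows "omega_M1 M R q x = Z"
proof -
  have distinct: "distinct (map (\<lambda>(q, x, Z). (q, x)) R)"
    using assms(1) by (simp add: valid_requirement_def)
  have "(THE Z. (q, x, Z) \<in> set R) = Z"
  proof (rule the_equality)
    fix Z' assume "(q, x, Z') \<in> set R"
    with assms(2) distinct show "Z' = Z"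
      by (metis (no_types, lifting) case_prod_conv distinct_map inj_on_contraD prod.inject)
  qed (rule assms(2))
  then show ?thesis using assms(2) by (auto simp: omega_M1_def)
qed

lemma take_Suc_in_pref: "i < length xs \<Longrightarrow> take (Suc i) xs \<in> pref {xs}"
  unfolding pref_def by (auto intro: exI[of _ "drop (Suc i) xs"])

lemma pref_UN: "pref T = (\<Union>t \<in> T. pref {t})"
  by (auto simp: pref_def)

definition violates ::
  "('s, 'x, 'y) fsm \<Rightarrow> ('q, 'x, 'y) fsm \<Rightarrow> ('q, 'x, 'y) requirement \<Rightarrow> 'x list \<Rightarrow> 'x \<Rightarrow> bool" where
  "violates S M R p x \<longleftrightarrow>
     omega S (after S (initial S) p) x \<notin> omega_M1 M R (after M (initial M) p) x"

definition violations ::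
  "('s, 'x, 'y) fsm \<Rightarrow> ('q, 'x, 'y) fsm \<Rightarrow> ('q, 'x, 'y) requirement \<Rightarrow> 'x list set" where
  "violations S M R =
     {p @ [x] | p x. p \<in> lists (inputs M) \<and> x \<in> inputs M \<and> violates S M R p x}"

lemma snoc_in_violations_iff [simp]:
  "p @ [x] \<in> violations S M R \<longleftrightarrow>
     p \<in> lists (inputs M) \<and> x \<in> inputs M \<and> violates S M R p x"
  by (auto simp: violations_def)

lemma violationsE:
  assumes "w \<in> violations S M R"
  obtains p x where "w = p @ [x]" "p \<in> lists (inputs M)" "x \<in> inputs M" "violates S M R p x"
  using assms by (auto simp: violations_def)

locale dfsm_under_requirement =
  fixes M :: "('q, 'x, 'y) fsm" and R :: "('q, 'x, 'y) requirement" and S :: "('s, 'x, 'y) fsm"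
  assumes cs_dfsm_M: "cs_dfsm M"
    and valid_R: "valid_requirement M R"
    and cs_dfsm_S: "cs_dfsm S"
    and inputs_S: "inputs S = inputs M"
    and outputs_S: "outputs S = outputs M"
begin

lemma omega_S_in_outputs:
  "p \<in> lists (inputs M) \<Longrightarrow> x \<in> inputs M \<Longrightarrow> omega S (after S (initial S) p) x \<in> outputs M"
  using cs_dfsm_delta_omega_closed(2)[OF cs_dfsm_S after_in_states[OF cs_dfsm_S cs_dfsm_initial]]
    cs_dfsm_S inputs_S outputs_S by auto

lemma violation_constrained:
  assumes "p \<in> lists (inputs M)" "x \<in> inputs M" "violates S M R p x"
  obtains Z where "(after M (initial M) p, x, Z) \<in> set R"
  using assms omega_S_in_outputs[OF assms(1,2)]
  by (auto simp: violates_def omega_M1_def split: if_splits)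

lemma violations_subset_Pi_bar: "violations S M R \<subseteq> Pi_bar M R"
proof
  fix w assume "w \<in> violations S M R"
  then obtain p x where w: "w = p @ [x]" and p: "p \<in> lists (inputs M)" and x: "x \<in> inputs M"
    and bad: "violates S M R p x"
    by (rule violationsE)
  obtain Z where Z: "(after M (initial M) p, x, Z) \<in> set R"
    using violation_constrained[OF p x bad] .
  have "p \<in> Pi_set M (after M (initial M) p)" using p by (simp add: Pi_set_def)
  then have "w \<in> (\<lambda>\<pi>. \<pi> @ [x]) ` Pi_set M (after M (initial M) p)" by (simp add: w)
  with Z show "w \<in> Pi_bar M R" unfolding Pi_bar_def by (auto intro!: bexI[OF _ Z])
qed

lemma pass_iff_no_violating_prefix:
  assumes xs: "xs \<in> lists (inputs M)"
  shows "pass S (abstraction M R) xs \<longleftrightarrow> pref {xs} \<inter> violations S M R = {}"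
proof -
  have "pass S (abstraction M R) xs \<longleftrightarrow> (\<forall>i<length xs. \<not> violates S M R (take i xs) (xs ! i))"
    using omega_seq_in_omega_set_abstraction_iff[OF cs_dfsm_M cs_dfsm_S inputs_S
        cs_dfsm_initial[OF cs_dfsm_M] cs_dfsm_initial[OF cs_dfsm_S] xs]
    by (simp add: pass_def abstraction_def violates_def)
  also have "\<dots> \<longleftrightarrow> pref {xs} \<inter> violations S M R = {}"
  proof
    assume ok: "\<forall>i<length xs. \<not> violates S M R (take i xs) (xs ! i)"
    show "pref {xs} \<inter> violations S M R = {}"
    proof (rule ccontr)
      assume "pref {xs} \<inter> violations S M R \<noteq> {}"
      then obtain w where "w \<in> pref {xs}" "w \<in> violations S M R" by auto
      then obtain p x u where "xs = p @ [x] @ u" "violates S M R p x"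
        by (auto simp: pref_def elim: violationsE)
      with ok[rule_format, of "length p"] show False by simp
    qed
  next
    assume none: "pref {xs} \<inter> violations S M R = {}"
    show "\<forall>i<length xs. \<not> violates S M R (take i xs) (xs ! i)"
    proof (intro allI impI notI)
      fix i assume i: "i < length xs" and bad: "violates S M R (take i xs) (xs ! i)"
      have "take i xs \<in> lists (inputs M)" "xs ! i \<in> inputs M"
        using xs i by (auto dest: in_set_takeD)
      with bad have "take i xs @ [xs ! i] \<in> violations S M R" by simp
      moreover have "take i xs @ [xs ! i] \<in> pref {xs}"
        using take_Suc_in_pref[OF i] i by (simp add: take_Suc_conv_app_nth)
      ultimately show False using none by auto
    qed
  qed
  finally show ?thesis .
qed

lemma pass_set_iff_no_violating_prefix:
  assumes "T \<subseteq> lists (inputs M)"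
  shows "pass_set S (abstraction M R) T \<longleftrightarrow> pref T \<inter> violations S M R = {}"
proof -
  have "pass_set S (abstraction M R) T \<longleftrightarrow> (\<forall>t \<in> T. pref {t} \<inter> violations S M R = {})"
    unfolding pass_set_def using assms by (intro ball_cong refl pass_iff_no_violating_prefix) auto
  also have "\<dots> \<longleftrightarrow> pref T \<inter> violations S M R = {}"
    by (subst pref_UN) auto
  finally show ?thesis .
qed

lemma satisfies_iff_no_violations: "satisfies S M R \<longleftrightarrow> violations S M R = {}"
proof
  assume sat: "satisfies S M R"
  show "violations S M R = {}"
  proof (rule ccontr)
    assume "violations S M R \<noteq> {}"
    then obtain w where "w \<in> violations S M R" by blast
    then obtain p x where "w = p @ [x]" and p: "p \<in> lists (inputs M)" and x: "x \<in> inputs M"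
      and bad: "violates S M R p x"
      by (rule violationsE)
    obtain Z where Z: "(after M (initial M) p, x, Z) \<in> set R"
      using violation_constrained[OF p x bad] .
    have "p \<in> Pi_set M (after M (initial M) p)" using p by (simp add: Pi_set_def)
    with sat Z have "omega S (after S (initial S) p) x \<in> Z" by (fastforce simp: satisfies_def)
    with bad show False by (simp add: violates_def omega_M1_requirement[OF valid_R Z])
  qed
next
  assume none: "violations S M R = {}"
  show "satisfies S M R" unfolding satisfies_def
  proof (clarify)
    fix q x Z \<pi> assume qxZ: "(q, x, Z) \<in> set R" and \<pi>: "\<pi> \<in> Pi_set M q"
    have "\<pi> \<in> lists (inputs M)" "after M (initial M) \<pi> = q" "x \<in> inputs M"
      using \<pi> qxZ valid_R by (auto simp: Pi_set_def valid_requirement_def)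
    moreover have "\<pi> @ [x] \<notin> violations S M R" using none by simp
    ultimately show "omega S (after S (initial S) \<pi>) x \<in> Z"
      by (simp add: violates_def omega_M1_requirement[OF valid_R qxZ])
  qed
qed

lemma reduction_has_no_violations:
  assumes "L S \<subseteq> L (abstraction M R)"
  shows "violations S M R = {}"
proof (rule ccontr)
  assume "violations S M R \<noteq> {}"
  then obtain w where w: "w \<in> violations S M R" by blast
  then have wl: "w \<in> lists (inputs M)" by (auto elim!: violationsE)
  have "zip w (omega_seq S (initial S) w) \<in> L S"
    using lang_rel_zip_omega_seq[OF cs_dfsm_S cs_dfsm_initial[OF cs_dfsm_S]] wl inputs_S
    by (simp add: L_def lang_def)
  with assms have "pass S (abstraction M R) w"
    by (auto simp: L_def pass_def omega_set_def abstraction_def)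
  then have "pref {w} \<inter> violations S M R = {}" using pass_iff_no_violating_prefix[OF wl] by simp
  moreover have "w \<in> pref {w}" by (auto simp: pref_def)
  ultimately show False using w by blast
qed

end

theorem theorem4:
  fixes M :: "('q, 'x, 'y) fsm"
    and R :: "('q, 'x, 'y) requirement"
    and D :: "('s, 'x, 'y) fsm set"
    and TS :: "'x list set"
  assumes "prime_fsm M"
    and "valid_requirement M R"
    and "\<forall>S \<in> D. cs_dfsm S \<and> inputs S = inputs M \<and> outputs S = outputs M"
    and "TS \<subseteq> lists (inputs M)"
    and "\<forall>S \<in> D. L S \<subseteq> L (abstraction M R) \<longleftrightarrow> pass_set S (abstraction M R) TS"
  shows "\<forall>TS'. TS' \<subseteq> lists (inputs M) \<longrightarrow> pref TS \<inter> Pi_bar M R \<subseteq> TS' \<longrightarrow>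
           (\<forall>S \<in> D. pass_set S (abstraction M R) TS' \<longleftrightarrow> satisfies S M R)"
proof (intro allI impI ballI)
  fix TS' S
  assume TS': "TS' \<subseteq> lists (inputs M)" "pref TS \<inter> Pi_bar M R \<subseteq> TS'" and "S \<in> D"
  then interpret dfsm_under_requirement M R S
    using assms(1-3) by unfold_locales (auto simp: prime_fsm_def)
  let ?V = "violations S M R"
  have "?V = {}" if "pref TS' \<inter> ?V = {}"
  proof (rule reduction_has_no_violations, rule ccontr)
    assume "\<not> L S \<subseteq> L (abstraction M R)"
    then have "pref TS \<inter> ?V \<noteq> {}"
      using assms(4,5) \<open>S \<in> D\<close> pass_set_iff_no_violating_prefix by blast
    then have "TS' \<inter> ?V \<noteq> {}" using TS'(2) violations_subset_Pi_bar by blast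
    moreover have "TS' \<subseteq> pref TS'" by (force simp: pref_def)
    ultimately show False using that by blast
  qed
  then show "pass_set S (abstraction M R) TS' \<longleftrightarrow> satisfies S M R"
    using pass_set_iff_no_violating_prefix[OF TS'(1)] satisfies_iff_no_violations by blast
qed

end
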